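(* Let $m$ be a positive integer. Then \[ \frac{d^m}{dz^m}\csc^2(\pi z)=2(-\pi)^m\csc^{m+2}(\pi z)P_m(z), \] where $P_m(z)=\sum_{0\le j\le m,\ j\equiv m\ (\mathrm{mod}\ 2)}a_{m,j}\cos(j\pi z)$ for real constants $a_{m,j}$ satisfying: (i) $a_{m,j}>0$ for all $0\le j\le m$ with $j\equiv m\pmod 2$; (ii) $\sum_{0\le j\le m,\ j\equiv m\ (\mathrm{mod}\ 2)}a_{m,j}=\frac{(m+1)!}{2}$; (iii) $a_{m,m}=1$.
   Context: $\csc x=1/\sin x$. *)

theory Defs
  imports "HOL-Analysis.Analysis"
begin

definition csc :: "complex \<Rightarrow> complex" where
  "csc x = 1 / sin x"

end

theory Submission
  imports Defs
begin

text \<open>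
  Induct on m with the m-th derivative written as 2 (-pi)^m P_m(pi z) / sin(pi z)^(m+2):
  differentiating once more gives P_(m+1)(x) = (m + 2) cos x P_m(x) - sin x P_m'(x). The product-to-sum formulas turn this
  into a recursion for the cosine coefficients,
  a(m+1, k) = ((m + 3 + k) a(m, k+1) + (m + 3 - k) a(m, k-1)) / 2
  (with a(m, 0) counted twice at k = 1). Since a(m, j) = 0 for j > m, every weight that occurs
  is positive, so positivity, the parity pattern and a(m, m) = 1 follow by induction on m.
  At x = 0 the recursion reads P_(m+1)(0) = (m + 2) P_m(0), which yields the sum (m + 1)!/2.
\<close>

lemma cos_mul_cos_add_sin_mul_sin:
  fixes x :: "'a :: {real_normed_field, banach}"
  shows "of_real M * cos x * cos (of_nat j * x) + of_nat j * sin x * sin (of_nat j * x)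
    = of_real ((M + real j) / 2) * cos ((of_nat j - 1) * x)
      + of_real ((M - real j) / 2) * cos ((of_nat j + 1) * x)"
proof -
  have "(of_nat j - 1) * x = of_nat j * x - x" "(of_nat j + 1) * x = of_nat j * x + x"
    by (simp_all add: algebra_simps)
  then show ?thesis
    by (simp add: cos_diff cos_add field_simps)
qed

text \<open>
  The cosine coefficients of M cos x f(x) - sin x f'(x) for f(x) = \<Sum> b_j cos (j x).
  The last summand is the contribution of b_0 through cos (-x) = cos x.
\<close>
definition cos_coeff_step :: "real \<Rightarrow> (nat \<Rightarrow> real) \<Rightarrow> nat \<Rightarrow> real" where
  "cos_coeff_step M b k =
     (M + 1 + real k) / 2 * b (Suc k)
     + (case k of 0 \<Rightarrow> 0 | Suc i \<Rightarrow> (M - real i) / 2 * b i)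
     + (if k = 1 then M / 2 * b 0 else 0)"

lemma sum_cos_coeff_step:
  fixes x :: "'a :: {real_normed_field, banach}"
  assumes "\<forall>j>n. b j = 0"
  shows "(\<Sum>k\<le>Suc n. of_real (cos_coeff_step M b k) * cos (of_nat k * x))
       = (\<Sum>j\<le>n. of_real (b j) *
            (of_real M * cos x * cos (of_nat j * x) + of_nat j * sin x * sin (of_nat j * x)))"
proof -
  define C where "C k = cos (of_nat k * x)" for k
  have down: "(\<Sum>j\<le>n. of_real ((M + real j) / 2 * b j) * cos ((of_nat j - 1) * x))
      = of_real (M / 2 * b 0) * C 1 + (\<Sum>k\<le>Suc n. of_real ((M + 1 + real k) / 2 * b (Suc k)) * C k)"
  proof -
    have "(\<Sum>j\<le>n. of_real ((M + real j) / 2 * b j) * cos ((of_nat j - 1) * x))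
        = of_real (M / 2 * b 0) * C 1 + (\<Sum>k<n. of_real ((M + 1 + real k) / 2 * b (Suc k)) * C k)"
      unfolding lessThan_Suc_atMost[symmetric] sum.lessThan_Suc_shift C_def
      by (simp add: algebra_simps)
    also have "(\<Sum>k<n. of_real ((M + 1 + real k) / 2 * b (Suc k)) * C k)
        = (\<Sum>k\<le>Suc n. of_real ((M + 1 + real k) / 2 * b (Suc k)) * C k)"
      using assms by (simp add: lessThan_Suc_atMost[symmetric])
    finally show ?thesis .
  qed
  have up: "(\<Sum>j\<le>n. of_real ((M - real j) / 2 * b j) * C (Suc j))
      = (\<Sum>k\<le>Suc n. of_real (case k of 0 \<Rightarrow> 0 | Suc i \<Rightarrow> (M - real i) / 2 * b i) * C k)"
    by (subst sum.atMost_Suc_shift) simp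
  have fold: "(\<Sum>k\<le>Suc n. of_real (if k = 1 then M / 2 * b 0 else 0) * C k)
      = of_real (M / 2 * b 0) * C 1"
  proof -
    have "(\<Sum>k\<le>Suc n. of_real (if k = 1 then M / 2 * b 0 else 0) * C k)
        = (\<Sum>k\<le>Suc n. if k = 1 then of_real (M / 2 * b 0) * C k else 0)"
      by (intro sum.cong) auto
    then show ?thesis
      by (simp add: sum.delta)
  qed
  have "(\<Sum>j\<le>n. of_real (b j) *
            (of_real M * cos x * cos (of_nat j * x) + of_nat j * sin x * sin (of_nat j * x)))
      = (\<Sum>j\<le>n. of_real ((M + real j) / 2 * b j) * cos ((of_nat j - 1) * x))
        + (\<Sum>j\<le>n. of_real ((M - real j) / 2 * b j) * C (Suc j))"
    unfolding cos_mul_cos_add_sin_mul_sin sum.distrib[symmetric] C_def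
    by (intro sum.cong) (auto simp: algebra_simps)
  also have "\<dots> = (\<Sum>k\<le>Suc n. of_real (cos_coeff_step M b k) * C k)"
    unfolding down up fold[symmetric] cos_coeff_step_def of_real_add distrib_right sum.distrib
    by (simp add: algebra_simps)
  finally show ?thesis
    unfolding C_def ..
qed

fun csc2_coeff :: "nat \<Rightarrow> nat \<Rightarrow> real" where
  "csc2_coeff 0 j = (if j = 0 then 1 / 2 else 0)"
| "csc2_coeff (Suc m) j = cos_coeff_step (real m + 2) (csc2_coeff m) j"

lemma csc2_coeff_eq_0_above: "m < j \<Longrightarrow> csc2_coeff m j = 0"
  by (induction m arbitrary: j) (auto simp: cos_coeff_step_def split: nat.split)

lemma csc2_coeff_eq_0_parity: "j mod 2 \<noteq> m mod 2 \<Longrightarrow> csc2_coeff m j = 0"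
proof (induction m arbitrary: j)
  case (Suc m)
  have "csc2_coeff m (Suc j) = 0" "j = Suc i \<Longrightarrow> csc2_coeff m i = 0"
    "j = 1 \<Longrightarrow> csc2_coeff m 0 = 0" for i
    using Suc.prems by (intro Suc.IH; presburger)+
  then show ?case
    by (simp add: cos_coeff_step_def split: nat.split)
qed simp

lemma csc2_coeff_nonneg: "csc2_coeff m j \<ge> 0"
proof (induction m arbitrary: j)
  case (Suc m)
  have "(real m + 2 - real i) * csc2_coeff m i \<ge> 0" for i
    using Suc.IH[of i] csc2_coeff_eq_0_above[of m i] by (cases "i \<le> m") auto
  then show ?case
    using Suc.IH by (simp add: cos_coeff_step_def split: nat.split)
qed simp

lemma csc2_coeff_pos: "j \<le> m \<Longrightarrow> j mod 2 = m mod 2 \<Longrightarrow> csc2_coeff m j > 0"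
proof (induction m arbitrary: j)
  case (Suc m)
  show ?case
  proof (cases j)
    case 0
    with Suc.prems have "csc2_coeff m 1 > 0"
      by (intro Suc.IH) presburger+
    with 0 show ?thesis
      by (simp add: cos_coeff_step_def)
  next
    case (Suc i)
    with Suc.prems have "csc2_coeff m i > 0"
      by (intro Suc.IH) presburger+
    moreover have "i \<le> m"
      using Suc Suc.prems by simp
    ultimately have "(real m + 2 - real i) / 2 * csc2_coeff m i > 0"
      by simp
    moreover have "(real m + 2 + 1 + real j) / 2 * csc2_coeff m (Suc j) \<ge> 0"
      "(if j = 1 then (real m + 2) / 2 * csc2_coeff m 0 else 0) \<ge> 0"
      using csc2_coeff_nonneg[of m] by simp_all
    ultimately show ?thesis
      unfolding csc2_coeff.simps cos_coeff_step_def Suc nat.case by linarith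
  qed
qed simp

lemma csc2_coeff_diag: "m \<ge> 1 \<Longrightarrow> csc2_coeff m m = 1"
proof (induction m)
  case (Suc m)
  then show ?case
    using csc2_coeff_eq_0_above[of m "Suc (Suc m)"]
    by (cases m) (simp_all add: cos_coeff_step_def)
qed simp

text \<open>The paper's P_m(z) is csc2_poly m (pi z).\<close>
definition csc2_poly :: "nat \<Rightarrow> 'a :: {real_normed_field, banach} \<Rightarrow> 'a" where
  "csc2_poly m x = (\<Sum>j\<le>m. of_real (csc2_coeff m j) * cos (of_nat j * x))"

lemma csc2_poly_Suc:
  "csc2_poly (Suc m) x = of_real (real m + 2) * cos x * csc2_poly m x
     + sin x * (\<Sum>j\<le>m. of_real (csc2_coeff m j) * of_nat j * sin (of_nat j * x))"
proof -
  have "csc2_poly (Suc m) x = (\<Sum>j\<le>m. of_real (csc2_coeff m j) *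
      (of_real (real m + 2) * cos x * cos (of_nat j * x) + of_nat j * sin x * sin (of_nat j * x)))"
    unfolding csc2_poly_def csc2_coeff.simps
    by (rule sum_cos_coeff_step) (auto intro: csc2_coeff_eq_0_above)
  then show ?thesis
    by (simp add: csc2_poly_def sum_distrib_left sum.distrib algebra_simps)
qed

lemma csc2_poly_has_field_derivative:
  "(csc2_poly m has_field_derivative
     - (\<Sum>j\<le>m. of_real (csc2_coeff m j) * of_nat j * sin (of_nat j * x))) (at x)"
  unfolding csc2_poly_def [abs_def] sum_negf[symmetric]
  by (auto intro!: derivative_eq_intros sum.cong)

lemma sum_csc2_coeff: "(\<Sum>j\<le>m. csc2_coeff m j) = fact (m + 1) / 2"
proof (induction m)
  case (Suc m)
  have "(\<Sum>j\<le>Suc m. csc2_coeff (Suc m) j) = (real m + 2) * (\<Sum>j\<le>m. csc2_coeff m j)"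
    using csc2_poly_Suc[of m "0 :: real"] by (simp add: csc2_poly_def)
  with Suc.IH show ?case
    by (simp add: algebra_simps)
qed simp

lemma csc2_poly_div_sin_power_has_field_derivative:
  fixes x :: "'a :: {real_normed_field, banach}"
  assumes "sin x \<noteq> 0"
  shows "((\<lambda>x. csc2_poly m x / sin x ^ (m + 2)) has_field_derivative
           - csc2_poly (Suc m) x / sin x ^ (Suc m + 2)) (at x)"
proof -
  have "((\<lambda>x. sin x ^ (m + 2)) has_field_derivative of_nat (m + 2) * sin x ^ (m + 1) * cos x) (at x)"
    using DERIV_power[OF DERIV_sin[of x], of "m + 2"] by (simp add: mult_ac)
  then have "((\<lambda>x. csc2_poly m x / sin x ^ (m + 2)) has_field_derivative
      ((- (\<Sum>j\<le>m. of_real (csc2_coeff m j) * of_nat j * sin (of_nat j * x))) * sin x ^ (m + 2)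
        - csc2_poly m x * (of_nat (m + 2) * sin x ^ (m + 1) * cos x))
      / (sin x ^ (m + 2) * sin x ^ (m + 2))) (at x)"
    using assms by (intro DERIV_divide csc2_poly_has_field_derivative) simp_all
  moreover have "((- (\<Sum>j\<le>m. of_real (csc2_coeff m j) * of_nat j * sin (of_nat j * x))) * sin x ^ (m + 2)
        - csc2_poly m x * (of_nat (m + 2) * sin x ^ (m + 1) * cos x))
      / (sin x ^ (m + 2) * sin x ^ (m + 2)) = - csc2_poly (Suc m) x / sin x ^ (Suc m + 2)"
  proof -
    have "sin x ^ (m + 2) = sin x ^ (m + 1) * sin x"
      "sin x ^ (Suc m + 2) = sin x ^ (m + 1) * sin x * sin x"
      by (simp_all add: power_add power2_eq_square power3_eq_cube mult_ac)
    with assms show ?thesis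
      by (simp add: csc2_poly_Suc field_simps)
  qed
  ultimately show ?thesis
    by simp
qed

lemma sin_pi_times_eq_0_iff:
  fixes z :: complex
  shows "sin (of_real pi * z) = 0 \<longleftrightarrow> z \<in> \<int>"
proof -
  have "of_real pi * z = of_real (of_int n * pi) \<longleftrightarrow> z = of_int n" for n :: int
    by (simp add: mult.commute)
  then show ?thesis
    by (auto simp: sin_eq_0 Ints_def)
qed

lemma higher_deriv_csc_pi_times_squared:
  fixes z :: complex
  assumes "z \<notin> \<int>"
  shows "(deriv ^^ m) (\<lambda>w. (csc (of_real pi * w))\<^sup>2) z
       = 2 * (- of_real pi) ^ m * (csc2_poly m (of_real pi * z) / sin (of_real pi * z) ^ (m + 2))"
  using assms
proof (induction m arbitrary: z)
  case 0
  then show ?case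
    by (simp add: csc2_poly_def csc_def power_one_over power2_eq_square)
next
  case (Suc m)
  define F where "F n w = csc2_poly n (of_real pi * w) / sin (of_real pi * w) ^ (n + 2)"
    for n and w :: complex
  define G where "G n w = 2 * (- of_real pi) ^ n * F n w" for n and w :: complex
  have "sin (of_real pi * z) \<noteq> 0"
    using Suc.prems by (simp add: sin_pi_times_eq_0_iff)
  from DERIV_chain2[OF csc2_poly_div_sin_power_has_field_derivative[OF this] DERIV_cmult_Id]
  have "(F m has_field_derivative - F (Suc m) z * of_real pi) (at z)"
    unfolding F_def [abs_def] by simp
  then have "(G m has_field_derivative 2 * (- of_real pi) ^ m * (- F (Suc m) z * of_real pi)) (at z)"
    unfolding G_def [abs_def] by (rule DERIV_cmult)
  then have "(G m has_field_derivative G (Suc m) z) (at z)"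
    by (simp add: G_def mult_ac)
  then have "((deriv ^^ m) (\<lambda>w. (csc (of_real pi * w))\<^sup>2) has_field_derivative G (Suc m) z) (at z)"
    by (rule has_field_derivative_transform_within_open[of _ _ _ "- \<int>"])
      (use Suc in \<open>auto simp: G_def F_def\<close>)
  then show ?case
    by (simp add: DERIV_imp_deriv G_def F_def)
qed

lemma sum_same_parity_atMost:
  fixes m :: nat and f :: "nat \<Rightarrow> 'a :: comm_monoid_add"
  assumes "\<And>j. j \<le> m \<Longrightarrow> j mod 2 \<noteq> m mod 2 \<Longrightarrow> f j = 0"
  shows "(\<Sum>j\<in>{j. j \<le> m \<and> j mod 2 = m mod 2}. f j) = (\<Sum>j\<le>m. f j)"
  by (rule sum.mono_neutral_left) (use assms in auto)

theorem lemma2p21: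
  fixes m :: nat
  assumes "m \<ge> 1"
  shows "\<exists>a :: nat \<Rightarrow> real.
           (\<forall>j\<in>{j. j \<le> m \<and> j mod 2 = m mod 2}. a j > 0) \<and>
           (\<Sum>j\<in>{j. j \<le> m \<and> j mod 2 = m mod 2}. a j) = fact (m + 1) / 2 \<and>
           a m = 1 \<and>
           (\<forall>z::complex. z \<notin> \<int> \<longrightarrow>
              (deriv ^^ m) (\<lambda>w. (csc (of_real pi * w))\<^sup>2) z =
                2 * (- of_real pi) ^ m * (csc (of_real pi * z)) ^ (m + 2) *
                (\<Sum>j\<in>{j. j \<le> m \<and> j mod 2 = m mod 2}.
                    of_real (a j) * cos (of_nat j * of_real pi * z)))"
proof (intro exI[of _ "csc2_coeff m"] conjI ballI allI impI)
  show "csc2_coeff m j > 0" if "j \<in> {j. j \<le> m \<and> j mod 2 = m mod 2}" for j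
    using that by (simp add: csc2_coeff_pos)
  show "(\<Sum>j\<in>{j. j \<le> m \<and> j mod 2 = m mod 2}. csc2_coeff m j) = fact (m + 1) / 2"
    by (simp add: sum_same_parity_atMost csc2_coeff_eq_0_parity sum_csc2_coeff)
  show "csc2_coeff m m = 1"
    using assms by (rule csc2_coeff_diag)
  fix z :: complex
  assume "z \<notin> \<int>"
  show "(deriv ^^ m) (\<lambda>w. (csc (of_real pi * w))\<^sup>2) z =
      2 * (- of_real pi) ^ m * (csc (of_real pi * z)) ^ (m + 2) *
      (\<Sum>j\<in>{j. j \<le> m \<and> j mod 2 = m mod 2}. of_real (csc2_coeff m j) * cos (of_nat j * of_real pi * z))"
    using higher_deriv_csc_pi_times_squared[OF \<open>z \<notin> \<int>\<close>, of m]
    by (simp add: csc2_poly_def sum_same_parity_atMost csc2_coeff_eq_0_parity csc_def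
        power_one_over mult_ac)
qed

end
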